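(* For the amalgam $\Gamma=G_0*_HG_1$ defined below, $K_0=H(0)$, $K_1=H(1)$, and $\ker\Gamma=K_0\cap K_1=H(0)\cap H(1)=\{e\}$.
   Context: Definition of $\Gamma$: write $\oplus$ for addition mod $2$. Let $H$ be the group with generators $h(i_1,\dots,i_n)$, one for each $n\ge1$ and $(i_1,\dots,i_n)\in\{0,1\}^n$, subject to $h(i_1,\dots,i_n)^2=e$ and, for sequences $(i_1,\dots,i_k)$, $(j_1,\dots,j_n)$ with $n\ge k$: $h(i_1,\dots,i_k)h(j_1,\dots,j_n)h(i_1,\dots,i_k)=h(j_1,\dots,j_k,j_{k+1}\oplus1,j_{k+2},\dots,j_n)$ if $n>k$ and $i_\ell=j_\ell$ for $1\le\ell\le k$, and $=h(j_1,\dots,j_n)$ otherwise. Let $\Gamma$ be generated by the $h$'s and $g_0,g_1$ with the relations of $H$ plus $g_0^2=g_1^2=e$, $(g_0h(1))^3=e$, $(g_1h(0))^3=e$, and for all $n\ge2$, $i_3,\dots,i_n\in\{0,1\}$: $g_0h(1,0,i_3,\dots,i_n)g_0=h(0,i_3,\dots,i_n)$, $g_0h(1,1,i_3,\dots,i_n)g_0=h(1,1,i_3,\dots,i_n)$, $g_1h(0,0,i_3,\dots,i_n)g_1=h(0,0,i_3,\dots,i_n)$, $g_1h(0,1,i_3,\dots,i_n)g_1=h(1,i_3,\dots,i_n)$. With $H\le\Gamma$ the subgroup generated by the $h$'s, $G_0=\langle H\cup\{g_0\}\rangle$, $G_1=\langle H\cup\{g_1\}\rangle$, one has $\Gamma=G_0*_HG_1$.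 For $j\in\{0,1\}$, $H(j)$ is the subgroup of $H$ generated by all $h(j,i_2,\dots,i_n)$, $n\ge1$, $i_2,\dots,i_n\in\{0,1\}$. For an amalgam $G_0*_HG_1$: for $j=0,1$ and $k\ge1$ let $T_{j,k}=\{x_0x_1\cdots x_{k-1}: x_i\in G_{i+j\bmod 2}\setminus H\}$, $T_{j,0}=H$, $C_{j,k}=\bigcap_{g\in T_{j,k}}gHg^{-1}$, $K_j=\bigcap_{k\ge0}C_{j,k}$, and $\ker\Gamma=\bigcap_{g\in\Gamma}gHg^{-1}$. *)

theory Defs
  imports "HOL-Algebra.Algebra"
begin

text \<open>Bits 0,1 are represented by False,True; addition of 1 mod 2 is negation.
  Generator h(i_1,...,i_n) (n \<ge> 1) is represented as Hg i_1 [i_2,...,i_n].\<close>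

datatype gen = Hg bool "bool list" | G0 | G1

fun hgen :: "bool list \<Rightarrow> gen" where
  "hgen (i # is) = Hg i is"
| "hgen [] = Hg False []"  (* never used: all h-indices are nonempty *)

type_synonym letter = "gen \<times> bool"   (* (generator, is_inverse) *)
type_synonym word = "letter list"

definition lt :: "gen \<Rightarrow> letter" where "lt g = (g, False)"
definition ltinv :: "gen \<Rightarrow> letter" where "ltinv g = (g, True)"
definition linv :: "letter \<Rightarrow> letter" where "linv x = (fst x, \<not> snd x)"

text \<open>Right-hand side of the conjugation relation of H:
  h(i) h(j) h(i) for |i| = k \<le> n = |j|.\<close>
definition hconj :: "bool list \<Rightarrow> bool list \<Rightarrow> bool list" where
  "hconj i j = (if length j > length i \<and> take (length i) j = i
                then take (length i) j @ [\<not> j ! length i] @ drop (Suc (length i)) j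
                else j)"

definition relators :: "word set" where
  "relators =
     {[lt (hgen w), lt (hgen w)] | w. w \<noteq> []}
   \<union> {[lt (hgen i), lt (hgen j), lt (hgen i), ltinv (hgen (hconj i j))] | i j.
         i \<noteq> [] \<and> length i \<le> length j}
   \<union> {[lt G0, lt G0], [lt G1, lt G1]}
   \<union> {[lt G0, lt (hgen [True]), lt G0, lt (hgen [True]), lt G0, lt (hgen [True])]}
   \<union> {[lt G1, lt (hgen [False]), lt G1, lt (hgen [False]), lt G1, lt (hgen [False])]}
   \<union> {[lt G0, lt (hgen (True # False # r)), lt G0, ltinv (hgen (False # r))] | r. True}
   \<union> {[lt G0, lt (hgen (True # True # r)), lt G0, ltinv (hgen (True # True # r))] | r. True}
   \<union> {[lt G1, lt (hgen (False # False # r)), lt G1, ltinv (hgen (False # False # r))] | r. True}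
   \<union> {[lt G1, lt (hgen (False # True # r)), lt G1, ltinv (hgen (True # r))] | r. True}"

inductive weq :: "word \<Rightarrow> word \<Rightarrow> bool" where
  weq_refl: "weq w w"
| weq_sym: "weq u v \<Longrightarrow> weq v u"
| weq_trans: "weq u v \<Longrightarrow> weq v w \<Longrightarrow> weq u w"
| weq_cancel: "weq (u @ [x, linv x] @ v) (u @ v)"
| weq_rel: "r \<in> relators \<Longrightarrow> weq (u @ r @ v) (u @ v)"

definition Gamma :: "word set monoid" where
  "Gamma = \<lparr> carrier = UNIV // {(u, v). weq u v},
             monoid.mult = (\<lambda>A B. {w. \<exists>a\<in>A. \<exists>b\<in>B. weq w (a @ b)}),
             monoid.one = {w. weq w []} \<rparr>"

definition gcls :: "gen \<Rightarrow> word set" where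
  "gcls g = {w. weq w [lt g]}"

definition hh :: "bool list \<Rightarrow> word set" where "hh w = gcls (hgen w)"

definition Hs :: "word set set" where
  "Hs = generate Gamma {hh w | w. w \<noteq> []}"

definition Hj :: "bool \<Rightarrow> word set set" where
  "Hj j = generate Gamma {hh (j # r) | r. True}"

definition Gs :: "nat \<Rightarrow> word set set" where
  "Gs j = generate Gamma (Hs \<union> {if j mod 2 = 0 then gcls G0 else gcls G1})"

fun Tprod :: "nat \<Rightarrow> nat \<Rightarrow> word set set" where
  "Tprod j 0 = {\<one>\<^bsub>Gamma\<^esub>}"
| "Tprod j (Suc k) = {x \<otimes>\<^bsub>Gamma\<^esub> y | x y. x \<in> Gs j - Hs \<and> y \<in> Tprod (Suc j) k}"

definition T :: "nat \<Rightarrow> nat \<Rightarrow> word set set" where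
  "T j k = (if k = 0 then Hs else Tprod j k)"

definition conjH :: "word set \<Rightarrow> word set set" where
  "conjH g = {g \<otimes>\<^bsub>Gamma\<^esub> x \<otimes>\<^bsub>Gamma\<^esub> inv\<^bsub>Gamma\<^esub> g | x. x \<in> Hs}"

definition C :: "nat \<Rightarrow> nat \<Rightarrow> word set set" where
  "C j k = (\<Inter>g\<in>T j k. conjH g)"

definition K :: "nat \<Rightarrow> word set set" where
  "K j = (\<Inter>k. C j k)"

definition kerGamma :: "word set set" where
  "kerGamma = (\<Inter>g\<in>carrier Gamma. conjH g)"

end

theory Submission
  imports Defs
begin

text \<open>\<open>\<Gamma>\<close> acts on infinite binary sequences: \<open>h(v)\<close> flips the bit following the prefix \<open>v\<close>,
  \<open>g\<^sub>0\<close> swaps the prefixes \<open>0\<close> and \<open>10\<close>, and \<open>g\<^sub>1\<close> swaps \<open>1\<close> and \<open>01\<close>.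
  The action of \<open>H\<close> is faithful (a word in the \<open>h(v)\<close> acting trivially cancels level by level),
  and \<open>H(j)\<close> only moves sequences starting with \<open>j\<close>; hence \<open>H(0) \<inter> H(1) = {e}\<close>.
  Conjugation by \<open>G\<^sub>0 - H\<close> carries \<open>H(0)\<close> into \<open>H(1)\<close>, and symmetrically \<open>G\<^sub>1 - H\<close> carries
  \<open>H(1)\<close> into \<open>H(0)\<close>; this gives \<open>H(j) \<subseteq> K\<^sub>j\<close>. Conversely, a suitable \<open>x \<in> G\<^sub>j - H\<close>
  conjugates \<open>y \<in> K\<^sub>j\<close> into \<open>K (j + 1)\<close> while pushing the sequences starting with \<open>1 - j\<close>
  one level deeper, so by induction on the depth \<open>y\<close> fixes all of them, which forces \<open>y \<in> H(j)\<close>.\<close>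


lemma weq_in_context: "weq u v \<Longrightarrow> weq (p @ u @ q) (p @ v @ q)"
proof (induction rule: weq.induct)
  case (weq_cancel u x v)
  have "weq ((p @ u) @ [x, linv x] @ (v @ q)) ((p @ u) @ (v @ q))" by (rule weq.weq_cancel)
  then show ?case by simp
next
  case (weq_rel r u v)
  have "weq ((p @ u) @ r @ (v @ q)) ((p @ u) @ (v @ q))" by (rule weq.weq_rel[OF weq_rel.hyps])
  then show ?case by simp
qed (auto intro: weq.intros)

declare weq_trans[trans]

lemma weq_append: "weq u u' \<Longrightarrow> weq v v' \<Longrightarrow> weq (u @ v) (u' @ v')"
  by (metis weq_in_context append_Nil append_Nil2 weq_trans)

definition cls :: "word \<Rightarrow> word set" where "cls w = {u. weq u w}"

lemma cls_eq_iff: "cls u = cls v \<longleftrightarrow> weq u v"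
  unfolding cls_def by (auto dest: weq_trans weq_sym intro: weq_refl)

lemma cls_eqI: "weq u v \<Longrightarrow> cls u = cls v"
  by (simp add: cls_eq_iff)

lemma carrier_Gamma: "carrier Gamma = range cls"
  unfolding Gamma_def quotient_def cls_def by (auto simp: Image_def intro: weq_sym)

lemma mult_cls: "cls a \<otimes>\<^bsub>Gamma\<^esub> cls b = cls (a @ b)"
  unfolding Gamma_def cls_def by (auto intro: weq_refl dest: weq_append weq_trans)

lemma one_Gamma: "\<one>\<^bsub>Gamma\<^esub> = cls []"
  unfolding Gamma_def cls_def by simp

definition word_inv :: "word \<Rightarrow> word" where "word_inv w = rev (map linv w)"

lemma weq_word_inv_cancel: "weq (word_inv w @ w) []"
proof (induction w)
  case Nil then show ?case by (simp add: word_inv_def weq_refl)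
next
  case (Cons x w)
  have "word_inv (x # w) @ x # w = word_inv w @ [linv x, linv (linv x)] @ w"
    by (simp add: word_inv_def linv_def)
  also have "weq \<dots> (word_inv w @ w)" by (rule weq_cancel)
  also have "weq \<dots> []" by (rule Cons.IH)
  finally show ?case .
qed

lemma group_Gamma: "group Gamma"
proof (rule groupI)
  fix x assume "x \<in> carrier Gamma"
  then obtain w where "x = cls w" by (auto simp: carrier_Gamma)
  then show "\<exists>y\<in>carrier Gamma. y \<otimes>\<^bsub>Gamma\<^esub> x = \<one>\<^bsub>Gamma\<^esub>"
    using weq_word_inv_cancel
    by (auto simp: carrier_Gamma mult_cls one_Gamma cls_eq_iff intro!: bexI[of _ "cls (word_inv w)"])
qed (auto simp: carrier_Gamma mult_cls one_Gamma)

interpretation Gamma: group Gamma by (rule group_Gamma)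

lemma inv_cls: "inv\<^bsub>Gamma\<^esub> (cls w) = cls (word_inv w)"
  by (rule Gamma.inv_equality) (auto simp: carrier_Gamma mult_cls one_Gamma cls_eq_iff weq_word_inv_cancel)


section \<open>Positive words\<close>

text \<open>All generators are involutions, so every element is the class of a word without inverse letters.\<close>

abbreviation pword :: "gen list \<Rightarrow> word" where "pword u \<equiv> map lt u"

lemma relator_weq_Nil: "r \<in> relators \<Longrightarrow> weq r []"
  using weq_rel[of r "[]" "[]"] by simp

lemma weq_square: "weq (pword [g, g]) []"
proof (rule relator_weq_Nil)
  show "pword [g, g] \<in> relators"
  proof (cases g)
    case (Hg b r) then show ?thesis unfolding relators_def by (auto intro!: exI[of _ "b # r"])
  qed (auto simp: relators_def)
qed

lemma weq_pword_in_context: "weq (pword b) (pword b') \<Longrightarrow> weq (pword (a @ b @ c)) (pword (a @ b' @ c))"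
  using weq_in_context[of "pword b" "pword b'" "pword a" "pword c"] by simp

lemma weq_pword_cancel_right: "weq (pword b) [] \<Longrightarrow> weq (pword (a @ b @ c)) (pword (a @ c))"
  using weq_pword_in_context[of b "[]" a c] by simp

lemma weq_pword_cancel_square: "weq (pword (a @ [g, g] @ c)) (pword (a @ c))"
  by (rule weq_pword_cancel_right[OF weq_square])

lemma weq_ltinv_lt: "weq [ltinv g] [lt g]"
proof -
  have "weq [ltinv g] ([ltinv g] @ pword [g, g])"
    using weq_in_context[OF weq_square, where p = "[ltinv g]" and q = "[]"] by (simp add: weq_sym)
  also have "[ltinv g] @ pword [g, g] = [] @ [ltinv g, linv (ltinv g)] @ [lt g]"
    by (simp add: ltinv_def linv_def lt_def)
  also have "weq \<dots> ([] @ [lt g])" by (rule weq_cancel)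
  finally show ?thesis by simp
qed

lemma weq_map: "(\<And>x. x \<in> set u \<Longrightarrow> weq [f x] [g x]) \<Longrightarrow> weq (map f u) (map g u)"
proof (induction u)
  case (Cons a u)
  then have "weq ([f a] @ map f u) ([g a] @ map g u)" by (intro weq_append) auto
  then show ?case by simp
qed (simp add: weq_refl)

lemma inv_cls_pword: "inv\<^bsub>Gamma\<^esub> (cls (pword u)) = cls (pword (rev u))"
proof -
  have "word_inv (pword u) = map ltinv (rev u)"
    by (simp add: word_inv_def rev_map linv_def lt_def ltinv_def)
  then have "weq (word_inv (pword u)) (pword (rev u))"
    using weq_map[of "rev u" ltinv lt] weq_ltinv_lt by simp
  then show ?thesis by (simp add: inv_cls cls_eq_iff)
qed

lemma weq_rev_cancel: "weq (pword (u @ rev u)) []"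
proof (induction u)
  case (Cons a u)
  have "pword ((a # u) @ rev (a # u)) = pword ([a] @ (u @ rev u) @ [a])" by simp
  also have "weq \<dots> (pword ([a] @ [a]))" by (rule weq_pword_cancel_right[OF Cons.IH])
  also have "weq \<dots> []" using weq_square by simp
  finally show ?case .
qed (simp add: weq_refl)

lemma relator_conj_weq: "[a, b, c, ltinv d] \<in> relators \<Longrightarrow> weq [a, b, c] [lt d]"
proof -
  assume r: "[a, b, c, ltinv d] \<in> relators"
  have "weq ([a, b, c] @ [] @ []) ([a, b, c] @ [ltinv d, linv (ltinv d)] @ [])"
    by (rule weq_in_context[OF weq_sym[OF weq_cancel[of "[]" _ "[]", simplified]]])
  also have "[a, b, c] @ [ltinv d, linv (ltinv d)] @ [] = [] @ [a, b, c, ltinv d] @ [lt d]"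
    by (simp add: linv_def ltinv_def lt_def)
  also have "weq \<dots> ([] @ [lt d])" by (rule weq_rel[OF r])
  finally show ?thesis by simp
qed

lemma weq_conj_move:
  assumes "\<And>x. x \<in> set u \<Longrightarrow> weq (pword [l, x, l]) (pword (f x))"
  shows "weq (pword (l # u)) (pword (concat (map f u) @ [l]))"
  using assms
proof (induction u)
  case (Cons x u)
  have "weq (pword (l # x # u)) (pword ([l, x] @ [l, l] @ u))"
    using weq_pword_cancel_square[of "[l, x]" l u] by (simp add: weq_sym)
  also have "pword ([l, x] @ [l, l] @ u) = pword ([l, x, l] @ (l # u))" by simp
  also have "weq (pword ([l, x, l] @ (l # u))) (pword (f x @ (concat (map f u) @ [l])))"
    using Cons by (simp only: map_append) (intro weq_append; auto)
  finally show ?case by simp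
qed (simp add: weq_refl)

lemma weq_conj_letterwise:
  assumes "\<forall>x\<in>set u. weq (pword [l, g x, l]) (c x)"
  shows "weq (pword ([l] @ map g u @ [l])) (concat (map c u))"
  using assms
proof (induction u)
  case Nil then show ?case using weq_square by simp
next
  case (Cons x u)
  have "weq (pword ([l] @ map g (x # u) @ [l])) (pword ([l, g x] @ [l, l] @ (map g u @ [l])))"
    using weq_pword_cancel_square[of "[l, g x]" l "map g u @ [l]"] by (simp add: weq_sym)
  also have "\<dots> = pword [l, g x, l] @ pword ([l] @ map g u @ [l])" by simp
  also have "weq \<dots> (c x @ concat (map c u))" using Cons by (intro weq_append) auto
  finally show ?case by simp
qed

lemma weq_commute_of_conj: "weq (pword [a, b, a]) (pword [b]) \<Longrightarrow> weq (pword [a, b]) (pword [b, a])"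
  using weq_conj_move[of "[b]" a "\<lambda>x. [x]"] by simp

lemma weq_conj_swap: "weq (pword [a, x, a]) (pword [y]) \<Longrightarrow> weq (pword [a, y, a]) (pword [x])"
proof -
  assume h: "weq (pword [a, x, a]) (pword [y])"
  have "weq (pword ([a] @ [y] @ [a])) (pword ([a] @ [a, x, a] @ [a]))"
    using weq_pword_in_context[OF h] weq_sym by blast
  also have "\<dots> = pword ([] @ [a, a] @ ([x] @ [a, a] @ []))" by simp
  also have "weq \<dots> (pword ([] @ [x] @ [a, a] @ []))" by (rule weq_pword_cancel_square)
  also have "\<dots> = pword ([x] @ [a, a] @ [])" by simp
  also have "weq \<dots> (pword ([x] @ []))" by (rule weq_pword_cancel_square)
  finally show ?thesis by simp
qed

lemma weq_conj_trans:
  assumes "weq (pword (rev a @ x @ a)) (pword y)" "weq (pword (rev b @ y @ b)) (pword z)"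
  shows "weq (pword (rev (a @ b) @ x @ a @ b)) (pword z)"
proof -
  have "pword (rev (a @ b) @ x @ a @ b) = pword (rev b @ (rev a @ x @ a) @ b)" by simp
  also have "weq \<dots> (pword (rev b @ y @ b))" by (rule weq_pword_in_context[OF assms(1)])
  also have "weq \<dots> (pword z)" by (rule assms(2))
  finally show ?thesis .
qed


definition words_over :: "gen set \<Rightarrow> word set set" where
  "words_over A = {cls (pword u) | u. set u \<subseteq> A}"

lemma gcls_eq_cls: "gcls a = cls (pword [a])"
  by (simp add: gcls_def cls_def)

lemma words_over_carrier: "words_over A \<subseteq> carrier Gamma"
  by (auto simp: words_over_def carrier_Gamma)

lemma words_over_mult: "x \<in> words_over A \<Longrightarrow> y \<in> words_over A \<Longrightarrow> x \<otimes>\<^bsub>Gamma\<^esub> y \<in> words_over A"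
  unfolding words_over_def by clarsimp (metis map_append mult_cls set_append Un_least)

lemma words_over_inv: "x \<in> words_over A \<Longrightarrow> inv\<^bsub>Gamma\<^esub> x \<in> words_over A"
  unfolding words_over_def by (clarsimp simp: inv_cls_pword) (metis set_rev)

lemma words_over_one: "\<one>\<^bsub>Gamma\<^esub> \<in> words_over A"
  unfolding words_over_def one_Gamma by (auto intro!: exI[of _ "[]"])

lemma gcls_in_words_over: "a \<in> A \<Longrightarrow> gcls a \<in> words_over A"
  unfolding words_over_def gcls_eq_cls by (auto intro!: exI[of _ "[a]"])

lemma words_over_mono: "A \<subseteq> B \<Longrightarrow> words_over A \<subseteq> words_over B"
  unfolding words_over_def by auto

lemma generate_eq_words_over:
  assumes "gcls ` A \<subseteq> S" "S \<subseteq> words_over A"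
  shows "generate Gamma S = words_over A"
proof
  show "generate Gamma S \<subseteq> words_over A"
  proof
    fix x assume "x \<in> generate Gamma S"
    then show "x \<in> words_over A"
      by induction (use assms in \<open>auto intro: words_over_one words_over_inv words_over_mult\<close>)
  qed
next
  have "cls (pword u) \<in> generate Gamma S" if "set u \<subseteq> A" for u
    using that
  proof (induction u)
    case Nil then show ?case using generate.one[of Gamma S] by (simp add: one_Gamma)
  next
    case (Cons a u)
    have "gcls a \<in> generate Gamma S" using Cons.prems assms(1) by (auto intro: generate.incl)
    then have "cls (pword [a]) \<otimes>\<^bsub>Gamma\<^esub> cls (pword u) \<in> generate Gamma S"
      using Cons by (intro generate.eng) (auto simp: gcls_eq_cls)
    then show ?case by (simp add: mult_cls)
  qed
  then show "words_over A \<subseteq> generate Gamma S" by (auto simp: words_over_def)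
qed

definition hgens :: "gen set" where "hgens = {Hg b r | b r. True}"
definition hgens_at :: "bool \<Rightarrow> gen set" where "hgens_at b = {Hg b r | r. True}"

abbreviation h1 :: gen where "h1 \<equiv> Hg True []"

lemma Hs_eq: "Hs = words_over hgens"
proof -
  have "{hh w | w. w \<noteq> []} = gcls ` hgens"
    unfolding hh_def hgens_def by (auto simp: neq_Nil_conv) (metis hgen.simps(1))
  then show ?thesis unfolding Hs_def by (auto intro!: generate_eq_words_over gcls_in_words_over)
qed

lemma Hj_eq: "Hj b = words_over (hgens_at b)"
proof -
  have "{hh (b # r) | r. True} = gcls ` hgens_at b" unfolding hh_def hgens_at_def by auto
  then show ?thesis unfolding Hj_def by (auto intro!: generate_eq_words_over gcls_in_words_over)
qed

lemma Gs_eq: "Gs j = words_over (insert (if even j then G0 else G1) hgens)"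
  unfolding Gs_def Hs_eq even_iff_mod_2_eq_zero[symmetric]
proof (rule generate_eq_words_over)
  have "words_over hgens \<subseteq> words_over (insert g hgens)" for g by (rule words_over_mono) auto
  then show "words_over hgens \<union> {if even j then gcls G0 else gcls G1}
    \<subseteq> words_over (insert (if even j then G0 else G1) hgens)"
    by (auto intro: gcls_in_words_over)
qed (auto intro: gcls_in_words_over)

lemma Hs_subgroup: "subgroup Hs Gamma"
  unfolding Hs_eq
proof (rule Gamma.subgroupI)
  show "words_over hgens \<noteq> {}" using words_over_one by blast
qed (auto intro: words_over_carrier[THEN subsetD] words_over_inv words_over_mult)

lemma Hj_subset_Hs: "Hj b \<subseteq> Hs"
  unfolding Hj_eq Hs_eq by (rule words_over_mono) (auto simp: hgens_def hgens_at_def)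

lemma Gs_carrier: "Gs j \<subseteq> carrier Gamma"
  unfolding Gs_eq by (rule words_over_carrier)

abbreviation hword :: "bool list list \<Rightarrow> word" where "hword us \<equiv> pword (map hgen us)"

lemma hgen_in_hgens_at: "v \<noteq> [] \<Longrightarrow> hgen v \<in> hgens_at (hd v)"
  by (cases v) (auto simp: hgens_at_def)

lemma set_subset_hgens_at_iff:
  "set u \<subseteq> hgens_at b \<longleftrightarrow> (\<exists>us. u = map hgen us \<and> (\<forall>v\<in>set us. v \<noteq> [] \<and> hd v = b))"
proof
  assume "set u \<subseteq> hgens_at b"
  then show "\<exists>us. u = map hgen us \<and> (\<forall>v\<in>set us. v \<noteq> [] \<and> hd v = b)"
  proof (induction u)
    case Nil show ?case by simp
  next
    case (Cons a u)
    then obtain us where "u = map hgen us" "\<forall>v\<in>set us. v \<noteq> [] \<and> hd v = b" by auto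
    moreover obtain r where "a = hgen (b # r)" using Cons.prems by (auto simp: hgens_at_def)
    ultimately show ?case by (intro exI[of _ "(b # r) # us"]) auto
  qed
qed (use hgen_in_hgens_at in fastforce)

lemma hgen_in_hgens: "v \<noteq> [] \<Longrightarrow> hgen v \<in> hgens"
  by (cases v) (auto simp: hgens_def)

lemma Hj_iff: "x \<in> Hj b \<longleftrightarrow> (\<exists>us. x = cls (hword us) \<and> (\<forall>v\<in>set us. v \<noteq> [] \<and> hd v = b))"
  unfolding Hj_eq words_over_def set_subset_hgens_at_iff by blast

lemma in_hgens_iff: "g \<in> hgens \<longleftrightarrow> (\<exists>v. v \<noteq> [] \<and> g = hgen v)"
proof
  assume "g \<in> hgens"
  then obtain b r where "g = Hg b r" by (auto simp: hgens_def)
  then show "\<exists>v. v \<noteq> [] \<and> g = hgen v" by (intro exI[of _ "b # r"]) simp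
qed (auto intro: hgen_in_hgens)

lemma set_subset_hgens_iff:
  "set u \<subseteq> hgens \<longleftrightarrow> (\<exists>us. u = map hgen us \<and> (\<forall>v\<in>set us. v \<noteq> []))"
proof
  assume "set u \<subseteq> hgens"
  then show "\<exists>us. u = map hgen us \<and> (\<forall>v\<in>set us. v \<noteq> [])"
  proof (induction u)
    case Nil show ?case by simp
  next
    case (Cons a u)
    then obtain us where "u = map hgen us" "\<forall>v\<in>set us. v \<noteq> []" by auto
    moreover obtain v where "a = hgen v" "v \<noteq> []" using Cons.prems by (auto simp: in_hgens_iff)
    ultimately show ?case by (intro exI[of _ "v # us"]) auto
  qed
qed (use hgen_in_hgens in fastforce)

lemma Hs_iff: "x \<in> Hs \<longleftrightarrow> (\<exists>us. x = cls (hword us) \<and> (\<forall>v\<in>set us. v \<noteq> []))"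
  unfolding Hs_eq words_over_def set_subset_hgens_iff by blast


section \<open>The action on infinite binary sequences\<close>

definition scons :: "bool \<Rightarrow> (nat \<Rightarrow> bool) \<Rightarrow> nat \<Rightarrow> bool" where
  "scons a s = (\<lambda>n. case n of 0 \<Rightarrow> a | Suc m \<Rightarrow> s m)"

definition stl :: "(nat \<Rightarrow> bool) \<Rightarrow> nat \<Rightarrow> bool" where
  "stl s = (\<lambda>n. s (Suc n))"

lemma scons_0 [simp]: "scons a s 0 = a"
  and scons_Suc [simp]: "scons a s (Suc n) = s n"
  and stl_scons [simp]: "stl (scons a s) = s"
  and stl_apply: "stl s n = s (Suc n)"
  by (simp_all add: scons_def stl_def)

lemma scons_stl_self [simp]: "scons (s 0) (stl s) = s"
  by (auto simp: scons_def stl_def fun_eq_iff split: nat.split)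

lemma scons_stl: "s 0 = a \<Longrightarrow> scons a (stl s) = s"
  using scons_stl_self[of s] by simp

fun h_act :: "bool list \<Rightarrow> (nat \<Rightarrow> bool) \<Rightarrow> nat \<Rightarrow> bool" where
  "h_act [] s = scons (\<not> s 0) (stl s)"
| "h_act (a # v) s = (if s 0 = a then scons a (h_act v (stl s)) else s)"

definition g0_act :: "(nat \<Rightarrow> bool) \<Rightarrow> nat \<Rightarrow> bool" where
  "g0_act s = (if \<not> s 0 then scons True (scons False (stl s))
               else if \<not> s 1 then scons False (stl (stl s)) else s)"

definition g1_act :: "(nat \<Rightarrow> bool) \<Rightarrow> nat \<Rightarrow> bool" where
  "g1_act s = (if s 0 then scons False (scons True (stl s))
               else if s 1 then scons True (stl (stl s)) else s)"

fun gen_act :: "gen \<Rightarrow> (nat \<Rightarrow> bool) \<Rightarrow> nat \<Rightarrow> bool" where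
  "gen_act (Hg b r) = h_act (b # r)"
| "gen_act G0 = g0_act"
| "gen_act G1 = g1_act"

text \<open>The inverse flag of a letter is ignored: every generator acts as an involution.\<close>

fun word_act :: "word \<Rightarrow> (nat \<Rightarrow> bool) \<Rightarrow> nat \<Rightarrow> bool" where
  "word_act [] = id"
| "word_act (x # w) = gen_act (fst x) \<circ> word_act w"

lemma word_act_append: "word_act (u @ v) = word_act u \<circ> word_act v"
  by (induction u) auto

lemma gen_act_hgen: "v \<noteq> [] \<Longrightarrow> gen_act (hgen v) = h_act v"
  by (cases v) auto

lemma h_act_involution [simp]: "h_act v (h_act v s) = s"
  by (induction v arbitrary: s) (auto simp: scons_stl)

lemma g0_act_involution [simp]: "g0_act (g0_act s) = s"
  and g1_act_involution [simp]: "g1_act (g1_act s) = s"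
  by (auto simp: g0_act_def g1_act_def fun_eq_iff stl_def scons_def split: nat.split)

lemma gen_act_involution [simp]: "gen_act g (gen_act g s) = s"
  by (cases g) auto

lemma hconj_simps:
  "hconj [] [] = []"
  "hconj [] (b # j) = (\<not> b) # j"
  "hconj (a # i) [] = []"
  "hconj (a # i) (b # j) = (if a = b then a # hconj i j else b # j)"
  by (auto simp: hconj_def)

lemma length_hconj [simp]: "length (hconj i j) = length j"
  by (auto simp: hconj_def)

lemma hconj_eq_Nil_iff [simp]: "hconj i j = [] \<longleftrightarrow> j = []"
  by (metis length_0_conv length_hconj)

lemma hd_hconj: "i \<noteq> [] \<Longrightarrow> j \<noteq> [] \<Longrightarrow> hd (hconj i j) = hd j"
  by (cases i; cases j) (auto simp: hconj_simps)

lemma h_act_conj: "length i \<le> length j \<Longrightarrow> h_act i (h_act j (h_act i s)) = h_act (hconj i j) s"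
proof (induction i arbitrary: j s)
  case Nil then show ?case by (cases j) (auto simp: hconj_simps)
next
  case (Cons a i)
  then obtain b j' where "j = b # j'" by (cases j) auto
  with Cons show ?case by (auto simp: hconj_simps scons_stl)
qed

lemma g_act_relations:
  "g0_act (h_act [True] (g0_act (h_act [True] (g0_act (h_act [True] s))))) = s"
  "g1_act (h_act [False] (g1_act (h_act [False] (g1_act (h_act [False] s))))) = s"
  "g0_act (h_act (True # False # r) (g0_act (h_act (False # r) s))) = s"
  "g0_act (h_act (True # True # r) (g0_act (h_act (True # True # r) s))) = s"
  "g1_act (h_act (False # False # r) (g1_act (h_act (False # False # r) s))) = s"
  "g1_act (h_act (False # True # r) (g1_act (h_act (True # r) s))) = s"
  by (auto simp: g0_act_def g1_act_def fun_eq_iff stl_def scons_def split: nat.split)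

lemma word_act_relator: "r \<in> relators \<Longrightarrow> word_act r = id"
proof -
  have conj: "h_act i (gen_act (hgen j) (h_act i (gen_act (hgen (hconj i j)) s))) = s"
    if "i \<noteq> []" "length i \<le> length j" for i j s
  proof -
    have "j \<noteq> []" using that by auto
    with that show ?thesis by (simp add: gen_act_hgen h_act_conj del: h_act.simps)
  qed
  show "r \<in> relators \<Longrightarrow> word_act r = id"
    unfolding relators_def
    by (elim UnE) (auto simp: lt_def ltinv_def fun_eq_iff gen_act_hgen conj g_act_relations
        simp del: h_act.simps)
qed

lemma word_act_weq: "weq u v \<Longrightarrow> word_act u = word_act v"
proof (induction rule: weq.induct)
  case (weq_cancel u x v)
  then show ?case by (simp add: word_act_append linv_def fun_eq_iff)
next
  case (weq_rel r u v)
  then show ?case by (simp add: word_act_append word_act_relator fun_eq_iff)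
qed auto

lemma word_act_cls: "cls u = cls v \<Longrightarrow> word_act u = word_act v"
  by (simp add: cls_eq_iff word_act_weq)

definition has_prefix :: "(nat \<Rightarrow> bool) \<Rightarrow> bool list \<Rightarrow> bool" where
  "has_prefix s v = (\<forall>k<length v. s k = v ! k)"

lemma has_prefix_Cons: "has_prefix s (a # v) \<longleftrightarrow> s 0 = a \<and> has_prefix (stl s) v"
  by (auto simp: has_prefix_def stl_def less_Suc_eq_0_disj)

lemma has_prefix_upd: "length v \<le> n \<Longrightarrow> has_prefix (s(n := x)) v = has_prefix s v"
  by (auto simp: has_prefix_def)

lemma scons_upd: "scons a (s(n := x)) = (scons a s)(Suc n := x)"
  by (auto simp: scons_def fun_eq_iff split: nat.split)

lemma h_act_eq: "h_act v s = (if has_prefix s v then s(length v := \<not> s (length v)) else s)"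
proof (induction v arbitrary: s)
  case Nil then show ?case by (auto simp: has_prefix_def scons_def stl_def fun_eq_iff split: nat.split)
next
  case (Cons a v)
  show ?case
  proof (cases "s 0 = a \<and> has_prefix (stl s) v")
    case True
    then have "h_act (a # v) s = scons a ((stl s)(length v := \<not> stl s (length v)))"
      using Cons.IH[of "stl s"] by (simp only: h_act.simps if_True simp_thms)
    also have "\<dots> = s(length (a # v) := \<not> s (length (a # v)))"
      using True by (simp add: scons_upd stl_apply scons_stl)
    finally show ?thesis using True by (simp add: has_prefix_Cons)
  qed (auto simp: Cons.IH has_prefix_Cons scons_stl)
qed

lemma word_act_hword_0: "\<forall>v\<in>set us. v \<noteq> [] \<Longrightarrow> word_act (hword us) s 0 = s 0"
  by (induction us) (auto simp: lt_def gen_act_hgen h_act_eq has_prefix_def)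

lemma word_act_Hs_0: "cls w \<in> Hs \<Longrightarrow> word_act w s 0 = s 0"
  by (metis Hs_iff word_act_cls word_act_hword_0)


section \<open>\<open>H\<close> acts faithfully\<close>

lemma hconj_relator:
  "i \<noteq> [] \<Longrightarrow> length i \<le> length j \<Longrightarrow> [lt (hgen i), lt (hgen j), lt (hgen i), ltinv (hgen (hconj i j))] \<in> relators"
  unfolding relators_def by blast

lemma weq_hconj:
  "i \<noteq> [] \<Longrightarrow> length i \<le> length j \<Longrightarrow> weq (pword [hgen i, hgen j, hgen i]) (pword [hgen (hconj i j)])"
  by (simp add: relator_conj_weq hconj_relator)

lemma weq_hword_move:
  assumes "v \<noteq> []" "\<forall>w\<in>set u. w \<noteq> [] \<and> length v \<le> length w"
  shows "weq (hword (v # u)) (hword (map (hconj v) u @ [v]))"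
  using assms(2)
proof (induction u)
  case (Cons w u)
  have "weq (hword (v # w # u)) (pword ([hgen v, hgen w] @ [hgen v, hgen v] @ map hgen u))"
    using weq_pword_cancel_square[of "[hgen v, hgen w]" "hgen v" "map hgen u"] by (simp add: weq_sym)
  also have "\<dots> = pword [hgen v, hgen w, hgen v] @ hword (v # u)" by simp
  also have "weq \<dots> (pword [hgen (hconj v w)] @ hword (map (hconj v) u @ [v]))"
    using Cons weq_hconj[OF assms(1)] by (intro weq_append) auto
  finally show ?case by simp
qed (simp add: weq_refl)

lemma weq_hword_split_level:
  assumes "\<forall>v\<in>set u. v \<noteq> [] \<and> n \<le> length v"
  shows "\<exists>u' t. weq (hword u) (hword (u' @ t))
     \<and> (\<forall>v\<in>set u'. n < length v \<and> length v \<in> length ` set u)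
     \<and> (\<forall>v\<in>set t. v \<noteq> [] \<and> length v = n)"
  using assms
proof (induction u)
  case Nil show ?case by (intro exI[of _ "[]"]) (auto intro: weq_refl)
next
  case (Cons v u)
  then obtain u' t where e: "weq (hword u) (hword (u' @ t))"
    and u': "\<forall>w\<in>set u'. n < length w \<and> length w \<in> length ` set u"
    and t: "\<forall>w\<in>set t. w \<noteq> [] \<and> length w = n" by auto
  have e1: "weq (hword (v # u)) (pword [hgen v] @ hword (u' @ t))"
    using weq_append[OF weq_refl[of "pword [hgen v]"] e] by simp
  show ?case
  proof (cases "n < length v")
    case True
    have "weq (hword (v # u)) (hword ((v # u') @ t))" using e1 by simp
    moreover have "\<forall>w\<in>set (v # u'). n < length w \<and> length w \<in> length ` set (v # u)"
      using True u' by auto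
    ultimately show ?thesis using t by blast
  next
    case False
    with Cons.prems have v: "v \<noteq> []" "length v = n" by auto
    have "weq (hword (v # u') @ hword t) (hword (map (hconj v) u' @ [v]) @ hword t)"
      using u' v by (intro weq_append weq_hword_move weq_refl) auto
    with e1 have "weq (hword (v # u)) (hword (map (hconj v) u' @ v # t))"
      by (auto intro: weq_trans)
    moreover have "\<forall>w\<in>set (map (hconj v) u'). n < length w \<and> length w \<in> length ` set (v # u)"
      using u' by auto
    moreover have "\<forall>w\<in>set (v # t). w \<noteq> [] \<and> length w = n" using t v by auto
    ultimately show ?thesis by blast
  qed
qed

lemma word_act_hword_level:
  assumes "\<forall>v\<in>set t. v \<noteq> [] \<and> length v = n"
  shows "word_act (hword t) s = (if odd (length (filter (has_prefix s) t)) then s(n := \<not> s n) else s)"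
  using assms
proof (induction t)
  case (Cons v t)
  then have IH: "word_act (hword t) s = (if odd (length (filter (has_prefix s) t)) then s(n := \<not> s n) else s)"
    and v: "v \<noteq> []" "length v = n" by auto
  have "word_act (hword (v # t)) s = h_act v (word_act (hword t) s)"
    using v by (simp add: lt_def gen_act_hgen)
  also have "has_prefix (word_act (hword t) s) v = has_prefix s v"
    using IH v by (simp add: has_prefix_upd)
  then have "h_act v (word_act (hword t) s)
      = (if has_prefix s v then (word_act (hword t) s)(n := \<not> word_act (hword t) s n) else word_act (hword t) s)"
    using v by (simp only: h_act_eq)
  finally show ?case using IH by (cases "has_prefix s v") auto
qed simp

lemma word_act_hword_fixes_below:
  assumes "\<forall>v\<in>set u. n < length v" "k \<le> n"
  shows "word_act (hword u) s k = s k"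
  using assms(1)
proof (induction u)
  case (Cons v u)
  then have "v \<noteq> []" by auto
  with Cons assms(2) show ?case by (simp add: lt_def gen_act_hgen h_act_eq)
qed simp

lemma weq_hword_level_Nil:
  assumes "\<forall>v\<in>set t. v \<noteq> [] \<and> length v = n" "\<forall>v. even (count_list t v)"
  shows "weq (hword t) []"
  using assms
proof (induction "length t" arbitrary: t rule: less_induct)
  case less
  show ?case
  proof (cases t)
    case Nil then show ?thesis by (simp add: weq_refl)
  next
    case (Cons v t')
    have "odd (count_list t' v)" using less.prems(2)[rule_format, of v] Cons by simp
    then have "v \<in> set t'" using count_notin by fastforce
    then obtain a b where t': "t' = a @ v # b" by (meson split_list)
    have a: "\<forall>w\<in>set a. w \<noteq> [] \<and> length w = length v" and v: "v \<noteq> []"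
      using less.prems(1) Cons t' by auto
    then have "map (hconj v) a = a" by (induction a) (auto simp: hconj_def)
    then have "weq (hword (v # a) @ hword [v] @ hword b) (hword (a @ [v]) @ hword [v] @ hword b)"
      using weq_hword_move[OF v] a by (intro weq_append weq_refl) (metis order_refl)
    also have "\<dots> = pword (map hgen a @ [hgen v, hgen v] @ map hgen b)" by simp
    also have "weq \<dots> (hword (a @ b))"
      using weq_pword_cancel_square[of "map hgen a" "hgen v" "map hgen b"] by simp
    also have "weq \<dots> []"
    proof (rule less.hyps)
      show "length (a @ b) < length t" "\<forall>w\<in>set (a @ b). w \<noteq> [] \<and> length w = n"
        using less.prems(1) Cons t' by auto
      show "\<forall>w. even (count_list (a @ b) w)"
      proof
        fix w
        have "count_list t w = count_list (a @ b) w + (if w = v then 2 else 0)"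
          using Cons t' by auto
        then show "even (count_list (a @ b) w)"
          using less.prems(2)[rule_format, of w] by (auto split: if_splits)
      qed
    qed
    finally show ?thesis using Cons t' by simp
  qed
qed

lemma has_prefix_nth_seq_iff:
  "length v = n \<Longrightarrow> length w = n \<Longrightarrow> has_prefix (\<lambda>k. if k < n then v ! k else False) w \<longleftrightarrow> w = v"
  unfolding has_prefix_def by (auto simp: list_eq_iff_nth_eq)

lemma even_count_list_of_level_act_id:
  assumes t: "\<forall>v\<in>set t. v \<noteq> [] \<and> length v = n" and act: "word_act (hword t) = id"
  shows "even (count_list t v)"
proof (cases "length v = n")
  case True
  define s where "s = (\<lambda>k. if k < n then v ! k else False)"
  have "filter (has_prefix s) t = filter ((=) v) t"
  proof (rule filter_cong[OF refl])
    fix w assume "w \<in> set t"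
    with t True show "has_prefix s w = (v = w)" unfolding s_def by (auto simp: has_prefix_nth_seq_iff)
  qed
  moreover have "\<not> odd (length (filter (has_prefix s) t))"
  proof
    assume "odd (length (filter (has_prefix s) t))"
    then have "s(n := \<not> s n) = s" using act word_act_hword_level[OF t, of s] by simp
    from fun_cong[OF this, of n] show False by simp
  qed
  ultimately show ?thesis by (simp add: count_list_eq_length_filter)
next
  case False
  with t have "v \<notin> set t" by auto
  then show ?thesis by simp
qed

text \<open>If \<open>word_act (hword u) = id\<close>, the letters of the lowest level cancel in pairs.\<close>

lemma weq_hword_drop_level:
  assumes u: "\<forall>v\<in>set u. v \<noteq> [] \<and> n \<le> length v" and act: "word_act (hword u) = id"
  obtains u' where "weq (hword u) (hword u')" "\<forall>v\<in>set u'. n < length v \<and> length v \<in> length ` set u"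
proof -
  obtain u' t where e: "weq (hword u) (hword (u' @ t))"
    and u': "\<forall>v\<in>set u'. n < length v \<and> length v \<in> length ` set u"
    and t: "\<forall>v\<in>set t. v \<noteq> [] \<and> length v = n"
    using weq_hword_split_level[OF u] by blast
  have cancel: "word_act (hword u') (word_act (hword t) s) = s" for s
    using word_act_weq[OF e] act by (simp add: word_act_append fun_eq_iff)
  have t_id: "word_act (hword t) = id"
  proof
    fix s
    have "word_act (hword t) s n = word_act (hword u') (word_act (hword t) s) n"
      using word_act_hword_fixes_below[of u' n n] u' by simp
    then have "word_act (hword t) s n = s n" using cancel[of s] by simp
    then show "word_act (hword t) s = id s"
      using word_act_hword_level[OF t, of s] by (auto split: if_splits)
  qed
  have "weq (hword u' @ hword t) (hword u' @ [])"
    using weq_hword_level_Nil[OF t] even_count_list_of_level_act_id[OF t t_id]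
    by (intro weq_append weq_refl) auto
  with e have "weq (hword u) (hword u')" by (auto intro: weq_trans)
  then show thesis using u' by (rule that)
qed

lemma weq_hword_Nil_of_act_id:
  assumes "\<forall>v\<in>set u. v \<noteq> []" "word_act (hword u) = id"
  shows "weq (hword u) []"
proof -
  have "weq (hword u) []"
    if "\<forall>v\<in>set u. v \<noteq> [] \<and> n \<le> length v \<and> length v < n + d" "word_act (hword u) = id" for d n u
    using that
  proof (induction d arbitrary: n u)
    case 0 then show ?case by (cases u) (auto simp: weq_refl)
  next
    case (Suc d)
    have "\<forall>v\<in>set u. v \<noteq> [] \<and> n \<le> length v" using Suc.prems(1) by auto
    then obtain u' where e: "weq (hword u) (hword u')"
      and u': "\<forall>v\<in>set u'. n < length v \<and> length v \<in> length ` set u"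
      using weq_hword_drop_level Suc.prems(2) by blast
    have "\<forall>v\<in>set u'. v \<noteq> [] \<and> Suc n \<le> length v \<and> length v < Suc n + d"
      using u' Suc.prems(1) by fastforce
    moreover have "word_act (hword u') = id" using word_act_weq[OF e] Suc.prems(2) by metis
    ultimately have "weq (hword u') []" by (rule Suc.IH)
    with e show ?case by (rule weq_trans)
  qed
  moreover have "\<forall>v\<in>set u. v \<noteq> [] \<and> 0 \<le> length v \<and> length v < 0 + Suc (sum_list (map length u))"
    using assms(1) by (auto simp: le_imp_less_Suc member_le_sum_list)
  ultimately show ?thesis using assms(2) by blast
qed


lemma hconj_hd_neq: "v \<noteq> [] \<Longrightarrow> w \<noteq> [] \<Longrightarrow> hd v \<noteq> hd w \<Longrightarrow> hconj v w = w"
  by (cases v; cases w) (auto simp: hconj_simps)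

lemma weq_hword_commute:
  assumes "v \<noteq> []" "w \<noteq> []" "hd v \<noteq> hd w"
  shows "weq (hword [v, w]) (hword [w, v])"
proof (cases "length v \<le> length w")
  case True
  then have "weq (pword [hgen v, hgen w, hgen v]) (pword [hgen w])"
    using weq_hconj[OF assms(1) True] hconj_hd_neq[OF assms] by simp
  then show ?thesis using weq_commute_of_conj by simp
next
  case False
  then have "weq (pword [hgen w, hgen v, hgen w]) (pword [hgen v])"
    using weq_hconj[OF assms(2), of v] hconj_hd_neq[OF assms(2,1)] assms(3) by simp
  then have "weq (pword [hgen w, hgen v]) (pword [hgen v, hgen w])" by (rule weq_commute_of_conj)
  then show ?thesis using weq_sym by simp
qed

lemma weq_hword_pass:
  assumes "v \<noteq> []" "\<forall>w\<in>set u. w \<noteq> [] \<and> hd w \<noteq> hd v"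
  shows "weq (hword (v # u)) (hword (u @ [v]))"
  using assms(2)
proof (induction u)
  case (Cons w u)
  have "weq (hword [v, w] @ hword u) (hword [w, v] @ hword u)"
    using assms(1) Cons.prems by (intro weq_append weq_hword_commute weq_refl) auto
  also have "\<dots> = pword [hgen w] @ hword (v # u)" by simp
  also have "weq \<dots> (pword [hgen w] @ hword (u @ [v]))"
    using Cons by (intro weq_append weq_refl) auto
  finally show ?case by simp
qed (simp add: weq_refl)

lemma weq_hword_sort_halves:
  assumes "\<forall>v\<in>set u. v \<noteq> []"
  shows "\<exists>ua ub. weq (hword u) (hword (ua @ ub)) \<and> (\<forall>v\<in>set ua. v \<noteq> [] \<and> hd v = a)
     \<and> (\<forall>v\<in>set ub. v \<noteq> [] \<and> hd v = (\<not> a))"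
  using assms
proof (induction u)
  case Nil show ?case by (intro exI[of _ "[]"]) (auto intro: weq_refl)
next
  case (Cons v u)
  then obtain ua ub where e: "weq (hword u) (hword (ua @ ub))"
    and ua: "\<forall>v\<in>set ua. v \<noteq> [] \<and> hd v = a" and ub: "\<forall>v\<in>set ub. v \<noteq> [] \<and> hd v = (\<not> a)" by auto
  have e1: "weq (hword (v # u)) (hword (v # ua) @ hword ub)"
    using weq_append[OF weq_refl[of "pword [hgen v]"] e] by simp
  show ?case
  proof (cases "hd v = a")
    case True
    have "weq (hword (v # u)) (hword ((v # ua) @ ub))" using e1 by simp
    moreover have "\<forall>w\<in>set (v # ua). w \<noteq> [] \<and> hd w = a" using ua True Cons.prems by auto
    ultimately show ?thesis using ub by blast
  next
    case False
    have "weq (hword (v # ua) @ hword ub) (hword (ua @ [v]) @ hword ub)"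
      using Cons.prems ua False by (intro weq_append weq_hword_pass weq_refl) auto
    with e1 have "weq (hword (v # u)) (hword (ua @ v # ub))" by (auto intro: weq_trans)
    moreover have "\<forall>w\<in>set (v # ub). w \<noteq> [] \<and> hd w = (\<not> a)" using ub False Cons.prems by auto
    ultimately show ?thesis using ua by blast
  qed
qed

lemma word_act_hword_other_half:
  assumes "\<forall>v\<in>set u. v \<noteq> [] \<and> hd v = b" "s 0 \<noteq> b"
  shows "word_act (hword u) s = s"
  using assms(1)
proof (induction u)
  case (Cons v u)
  then obtain r where "v = b # r" by (cases v) auto
  with Cons assms(2) show ?case by (simp add: lt_def)
qed simp

lemma Hj_False_inter_Hj_True: "Hj False \<inter> Hj True = {\<one>\<^bsub>Gamma\<^esub>}"
proof
  show "{\<one>\<^bsub>Gamma\<^esub>} \<subseteq> Hj False \<inter> Hj True"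
  proof -
    have "\<one>\<^bsub>Gamma\<^esub> \<in> Hj b" for b
      unfolding Hj_iff one_Gamma by (intro exI[of _ "[]"]) simp
    then show ?thesis by blast
  qed
next
  show "Hj False \<inter> Hj True \<subseteq> {\<one>\<^bsub>Gamma\<^esub>}"
  proof
    fix y assume y: "y \<in> Hj False \<inter> Hj True"
    obtain u0 where u0: "y = cls (hword u0)" "\<forall>v\<in>set u0. v \<noteq> [] \<and> hd v = False"
      using y Hj_iff by blast
    obtain u1 where u1: "y = cls (hword u1)" "\<forall>v\<in>set u1. v \<noteq> [] \<and> hd v = True"
      using y Hj_iff by blast
    have same: "word_act (hword u0) = word_act (hword u1)"
      using u0(1) u1(1) by (intro word_act_cls) simp
    have "word_act (hword u0) = id"
    proof
      fix s show "word_act (hword u0) s = id s"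
      proof (cases "s 0")
        case True then show ?thesis using word_act_hword_other_half[OF u0(2), of s] by simp
      next
        case False then show ?thesis using word_act_hword_other_half[OF u1(2), of s] same by simp
      qed
    qed
    with u0(2) have "weq (hword u0) []" by (intro weq_hword_Nil_of_act_id) auto
    then have "cls (hword u0) = cls []" by (rule cls_eqI)
    with u0(1) show "y \<in> {\<one>\<^bsub>Gamma\<^esub>}" by (simp add: one_Gamma)
  qed
qed

text \<open>Sorted into its \<open>H(\<not> b)\<close>-part and \<open>H(b)\<close>-part, the word's first part acts trivially,
  hence is trivial by faithfulness.\<close>

lemma Hj_of_fixes_other_half:
  assumes y: "cls w \<in> Hs" and fixed: "\<And>s. s 0 = (\<not> b) \<Longrightarrow> word_act w s = s"
  shows "cls w \<in> Hj b"
proof -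
  obtain u where u: "cls w = cls (hword u)" "\<forall>v\<in>set u. v \<noteq> []" using y Hs_iff by blast
  obtain ua ub where e: "weq (hword u) (hword (ua @ ub))"
    and ua: "\<forall>v\<in>set ua. v \<noteq> [] \<and> hd v = (\<not> b)" and ub: "\<forall>v\<in>set ub. v \<noteq> [] \<and> hd v = (\<not> \<not> b)"
    using weq_hword_sort_halves[OF u(2), of "\<not> b"] by blast
  have wa: "word_act w = word_act (hword ua) \<circ> word_act (hword ub)"
    using word_act_cls[OF u(1)] word_act_weq[OF e] by (simp only: map_append word_act_append)
  have "word_act (hword ua) = id"
  proof
    fix s show "word_act (hword ua) s = id s"
    proof (cases "s 0 = b")
      case True then show ?thesis using word_act_hword_other_half[OF ua, of s] by simp
    next
      case False
      then show ?thesis using fixed[of s] word_act_hword_other_half[OF ub, of s] wa by simp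
    qed
  qed
  with ua have "weq (hword ua) []" by (intro weq_hword_Nil_of_act_id) auto
  then have "weq (hword ua @ hword ub) ([] @ hword ub)" by (rule weq_append[OF _ weq_refl])
  then have "weq (hword (ua @ ub)) (hword ub)" by simp
  with e have "weq (hword u) (hword ub)" by (rule weq_trans)
  with u(1) have "cls w = cls (hword ub)" by (simp add: cls_eqI)
  with ub show ?thesis unfolding Hj_iff by blast
qed


section \<open>Conjugating \<open>H(0)\<close> by \<open>G\<^sub>0 - H\<close>\<close>

lemma weq_conj_hgen_same_half:
  assumes a: "a \<noteq> []" and w: "w \<noteq> []"
  shows "\<exists>z. weq (pword [hgen a, hgen w, hgen a]) (hword z) \<and> (\<forall>v\<in>set z. v \<noteq> [] \<and> hd v = hd w)"
proof (cases "length a \<le> length w")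
  case True
  then show ?thesis
    using weq_hconj[OF a True] hd_hconj[OF a w] w by (intro exI[of _ "[hconj a w]"]) simp
next
  case False
  then have lw: "length w \<le> length a" by simp
  show ?thesis
  proof (cases "hd a = hd w")
    case True
    have "weq (pword ([hgen w] @ [hgen (hconj w a)] @ [hgen a])) (pword ([hgen w] @ [hgen w, hgen a, hgen w] @ [hgen a]))"
      using weq_pword_in_context[OF weq_hconj[OF w lw]] weq_sym by blast
    also have "\<dots> = pword ([] @ [hgen w, hgen w] @ [hgen a, hgen w, hgen a])" by simp
    also have "weq \<dots> (pword ([] @ [hgen a, hgen w, hgen a]))" by (rule weq_pword_cancel_square)
    finally have "weq (pword [hgen a, hgen w, hgen a]) (hword [w, hconj w a, a])"
      using weq_sym by simp
    moreover have "\<forall>v\<in>set [w, hconj w a, a]. v \<noteq> [] \<and> hd v = hd w"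
      using a w True hd_hconj[OF w a] by auto
    ultimately show ?thesis by blast
  next
    case False
    have "weq (pword ([] @ [hgen a, hgen w] @ [hgen a])) (pword ([] @ [hgen w, hgen a] @ [hgen a]))"
      using weq_hword_commute[OF a w False] by (intro weq_pword_in_context) simp
    also have "\<dots> = pword ([hgen w] @ [hgen a, hgen a] @ [])" by simp
    also have "weq \<dots> (pword ([hgen w] @ []))" by (rule weq_pword_cancel_square)
    finally have "weq (pword [hgen a, hgen w, hgen a]) (hword [w])" by simp
    with w show ?thesis by (intro exI[of _ "[w]"]) auto
  qed
qed

lemma weq_conj_hgens_same_half:
  assumes "set m \<subseteq> hgens" "\<forall>v\<in>set u. v \<noteq> [] \<and> hd v = b"
  shows "\<exists>u'. weq (pword (rev m @ map hgen u @ m)) (hword u') \<and> (\<forall>v\<in>set u'. v \<noteq> [] \<and> hd v = b)"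
  using assms
proof (induction m arbitrary: u)
  case Nil then show ?case by (auto intro: weq_refl)
next
  case (Cons x m)
  obtain a where x: "x = hgen a" "a \<noteq> []" using Cons.prems(1) by (auto simp: in_hgens_iff)
  have "\<forall>v\<in>set u. \<exists>z. weq (pword [hgen a, hgen v, hgen a]) (hword z)
      \<and> (\<forall>w\<in>set z. w \<noteq> [] \<and> hd w = hd v)"
    using Cons.prems(2) weq_conj_hgen_same_half[OF x(2)] by blast
  from bchoice[OF this] obtain zf where zf: "\<forall>v\<in>set u. weq (pword [hgen a, hgen v, hgen a]) (hword (zf v))
      \<and> (\<forall>w\<in>set (zf v). w \<noteq> [] \<and> hd w = hd v)" by blast
  have "weq (pword ([hgen a] @ map hgen u @ [hgen a])) (concat (map (\<lambda>v. hword (zf v)) u))"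
    by (rule weq_conj_letterwise) (use zf in blast)
  then have u2: "weq (pword ([x] @ map hgen u @ [x])) (hword (concat (map zf u)))"
    using x by (simp add: map_concat comp_def)
  have b2: "\<forall>v\<in>set (concat (map zf u)). v \<noteq> [] \<and> hd v = b" using zf Cons.prems(2) by auto
  have "set m \<subseteq> hgens" using Cons.prems(1) by simp
  from Cons.IH[OF this b2] obtain u' where u': "weq (pword (rev m @ map hgen (concat (map zf u)) @ m)) (hword u')"
    "\<forall>v\<in>set u'. v \<noteq> [] \<and> hd v = b" by blast
  have "pword (rev (x # m) @ map hgen u @ x # m) = pword (rev m @ ([x] @ map hgen u @ [x]) @ m)" by simp
  also have "weq \<dots> (pword (rev m @ map hgen (concat (map zf u)) @ m))" by (rule weq_pword_in_context[OF u2])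
  also have "weq \<dots> (hword u')" by (rule u'(1))
  finally show ?case using u'(2) by blast
qed

lemma weq_g0_conj_10: "weq (pword [G0, hgen (True # False # r), G0]) (pword [hgen (False # r)])"
  by (simp, rule relator_conj_weq) (auto simp: relators_def)

lemma weq_g0_conj_11: "weq (pword [G0, hgen (True # True # r), G0]) (pword [hgen (True # True # r)])"
  by (simp, rule relator_conj_weq) (auto simp: relators_def)

lemma weq_g0_conj_0: "weq (pword [G0, hgen (False # r), G0]) (pword [hgen (True # False # r)])"
  by (rule weq_conj_swap[OF weq_g0_conj_10])

lemma weq_g0_h1_cube: "weq (pword [G0, h1, G0, h1, G0, h1]) []"
  by (rule relator_weq_Nil) (simp add: relators_def)

lemma weq_g0_h1_braid: "weq (pword [G0, h1, G0]) (pword [h1, G0, h1])"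
proof -
  have "weq (pword ([G0, h1, G0] @ [])) (pword ([G0, h1, G0] @ ([h1, G0, h1] @ rev [h1, G0, h1]) @ []))"
    using weq_pword_cancel_right[OF weq_rev_cancel] weq_sym by blast
  also have "\<dots> = pword ([] @ [G0, h1, G0, h1, G0, h1] @ [h1, G0, h1])" by simp
  also have "weq \<dots> (pword ([] @ [h1, G0, h1]))" by (rule weq_pword_cancel_right[OF weq_g0_h1_cube])
  finally show ?thesis by simp
qed

lemma weq_g0_h1_g0_h1: "weq (pword [G0, h1, G0, h1]) (pword [h1, G0])"
proof -
  have "weq (pword ([G0, h1, G0, h1] @ [])) (pword ([G0, h1, G0, h1] @ ([G0, h1] @ rev [G0, h1]) @ []))"
    using weq_pword_cancel_right[OF weq_rev_cancel] weq_sym by blast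
  also have "\<dots> = pword ([] @ [G0, h1, G0, h1, G0, h1] @ [h1, G0])" by simp
  also have "weq \<dots> (pword ([] @ [h1, G0]))" by (rule weq_pword_cancel_right[OF weq_g0_h1_cube])
  finally show ?thesis by simp
qed

text \<open>\<open>g\<^sub>0\<close> and \<open>h(1)\<close> generate a dihedral group of order 6 normalising the subgroup
  generated by the remaining generators of \<open>H\<close>; this gives a normal form for \<open>G\<^sub>0\<close>.\<close>

fun conj_h1 :: "gen \<Rightarrow> gen" where
  "conj_h1 (Hg b r) = hgen (hconj [True] (b # r))"
| "conj_h1 g = g"

fun conj_g0 :: "gen \<Rightarrow> gen" where
  "conj_g0 (Hg False r) = Hg True (False # r)"
| "conj_g0 (Hg True (False # r)) = Hg False r"
| "conj_g0 g = g"

lemma conj_h1_mem_weq: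
  assumes "x \<in> hgens - {h1}"
  shows "conj_h1 x \<in> hgens - {h1} \<and> weq (pword [h1, x, h1]) (pword [conj_h1 x])"
proof -
  obtain b r where x: "x = Hg b r" "(b, r) \<noteq> (True, [])" using assms by (auto simp: hgens_def)
  have "weq (pword [hgen [True], hgen (b # r), hgen [True]]) (pword [hgen (hconj [True] (b # r))])"
    by (rule weq_hconj) auto
  moreover have "conj_h1 x \<in> hgens - {h1}"
    using x by (cases r) (auto simp: hconj_simps hgens_def)
  ultimately show ?thesis using x by simp
qed

lemma conj_g0_mem_weq:
  assumes "x \<in> hgens - {h1}"
  shows "conj_g0 x \<in> hgens - {h1} \<and> weq (pword [G0, x, G0]) (pword [conj_g0 x])"
proof -
  obtain b r where x: "x = Hg b r" "(b, r) \<noteq> (True, [])" using assms by (auto simp: hgens_def)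
  consider "b = False" | c r' where "b = True" "r = c # r'" using x(2) by (cases r) auto
  then show ?thesis
  proof cases
    case 1 then show ?thesis using x weq_g0_conj_0[of r] by (auto simp: hgens_def)
  next
    case 2 then show ?thesis using x weq_g0_conj_10[of r'] weq_g0_conj_11[of r'] by (cases c) (auto simp: hgens_def)
  qed
qed

definition dihedral_words :: "gen list set" where
  "dihedral_words = {[], [h1], [G0], [h1, G0], [G0, h1], [h1, G0, h1]}"

lemma dihedral_words_step:
  assumes "l \<in> {h1, G0}" "s \<in> dihedral_words"
  shows "\<exists>s'\<in>dihedral_words. weq (pword (l # s)) (pword s')"
proof -
  have d: "weq (pword ([] @ [g, g] @ c)) (pword ([] @ c))" for g c by (rule weq_pword_cancel_square)
  show ?thesis using assms unfolding dihedral_words_def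
    by (elim insertE emptyE; simp only:)
       (use weq_refl d[of h1 "[]"] d[of h1 "[G0]"] d[of h1 "[G0, h1]"] d[of G0 "[]"] d[of G0 "[h1]"]
          weq_g0_h1_braid weq_g0_h1_g0_h1 in \<open>auto intro: bexI\<close>)
qed

lemma weq_G0_normal_form:
  "set w \<subseteq> insert G0 hgens \<Longrightarrow> \<exists>m s. weq (pword w) (pword (m @ s)) \<and> set m \<subseteq> hgens - {h1} \<and> s \<in> dihedral_words"
proof (induction w)
  case Nil show ?case by (intro exI[of _ "[]"]) (auto simp: dihedral_words_def intro: weq_refl)
next
  case (Cons l w)
  then obtain m s where e: "weq (pword w) (pword (m @ s))" and m: "set m \<subseteq> hgens - {h1}"
    and s: "s \<in> dihedral_words" by auto
  have e1: "weq (pword (l # w)) (pword (l # m @ s))"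
    using weq_append[OF weq_refl[of "[lt l]"] e] by simp
  show ?case
  proof (cases "l \<in> hgens - {h1}")
    case True
    have "weq (pword (l # w)) (pword ((l # m) @ s))" using e1 by simp
    moreover have "set (l # m) \<subseteq> hgens - {h1}" using True m by simp
    ultimately show ?thesis using s by blast
  next
    case False
    with Cons.prems have l: "l \<in> {h1, G0}" by (auto simp: hgens_def)
    define f where "f = (if l = h1 then conj_h1 else conj_g0)"
    have f: "f x \<in> hgens - {h1} \<and> weq (pword [l, x, l]) (pword [f x])" if "x \<in> hgens - {h1}" for x
      using l that conj_h1_mem_weq conj_g0_mem_weq by (auto simp: f_def)
    have "weq (pword (l # m)) (pword (concat (map (\<lambda>x. [f x]) m) @ [l]))"
      by (rule weq_conj_move) (use f m in auto)
    then have mv: "weq (pword (l # m)) (pword (map f m @ [l]))" by (simp add: concat_map_singleton)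
    obtain s' where s': "s' \<in> dihedral_words" "weq (pword (l # s)) (pword s')"
      using dihedral_words_step[OF l s] by blast
    have "weq (pword (l # m @ s)) (pword (map f m @ l # s))"
      using weq_append[OF mv weq_refl[of "pword s"]] by simp
    also have "weq \<dots> (pword (map f m @ s' @ []))"
      using weq_pword_in_context[OF s'(2), of "map f m" "[]"] by simp
    finally have "weq (pword (l # w)) (pword (map f m @ s'))" using e1 weq_trans by fastforce
    moreover have "set (map f m) \<subseteq> hgens - {h1}" using f m by auto
    ultimately show ?thesis using s' by blast
  qed
qed

lemma weq_conj_g0_H0:
  assumes "\<forall>v\<in>set u. v \<noteq> [] \<and> hd v = False"
  shows "weq (pword (rev [G0] @ map hgen u @ [G0])) (hword (map (Cons True) u))"
proof -
  have "weq (pword ([G0] @ map hgen u @ [G0])) (concat (map (\<lambda>v. pword [hgen (True # v)]) u))"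
  proof (rule weq_conj_letterwise, intro ballI)
    fix v assume "v \<in> set u"
    with assms obtain r where "v = False # r" by (cases v) auto
    then show "weq (pword [G0, hgen v, G0]) (pword [hgen (True # v)])" using weq_g0_conj_0[of r] by simp
  qed
  then show ?thesis by (simp add: comp_def)
qed

lemma weq_conj_h1_H0:
  assumes "\<forall>v\<in>set u. v \<noteq> [] \<and> hd v = False"
  shows "weq (pword (rev [h1] @ map hgen u @ [h1])) (hword u)"
proof -
  have "weq (pword ([h1] @ map hgen u @ [h1])) (concat (map (\<lambda>v. pword [hgen v]) u))"
  proof (rule weq_conj_letterwise, intro ballI)
    fix v assume "v \<in> set u"
    with assms obtain r where v: "v = False # r" by (cases v) auto
    have "weq (pword [hgen [True], hgen v, hgen [True]]) (pword [hgen (hconj [True] v)])"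
      by (rule weq_hconj) (auto simp: v)
    then show "weq (pword [h1, hgen v, h1]) (pword [hgen v])" by (simp add: v hconj_simps)
  qed
  then show ?thesis by (simp add: comp_def)
qed

lemma weq_conj_h1_10:
  assumes "\<forall>v\<in>set u. v \<noteq> [] \<and> hd v = False"
  shows "weq (pword (rev [h1] @ map hgen (map (Cons True) u) @ [h1])) (hword (map (\<lambda>v. True # True # tl v) u))"
proof -
  have "weq (pword ([h1] @ map hgen (map (Cons True) u) @ [h1]))
      (concat (map (\<lambda>v. pword [hgen (True # True # tl (tl v))]) (map (Cons True) u)))"
  proof (rule weq_conj_letterwise, intro ballI)
    fix v assume "v \<in> set (map (Cons True) u)"
    with assms obtain r where v: "v = True # False # r" by (auto simp: neq_Nil_conv)
    have "weq (pword [hgen [True], hgen v, hgen [True]]) (pword [hgen (hconj [True] v)])"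
      by (rule weq_hconj) (auto simp: v)
    then show "weq (pword [h1, hgen v, h1]) (pword [hgen (True # True # tl (tl v))])"
      by (simp add: v hconj_simps)
  qed
  then show ?thesis by (simp add: comp_def)
qed

lemma weq_conj_dihedral_H0:
  assumes s: "s \<in> dihedral_words" "s \<notin> {[], [h1]}" and u: "\<forall>v\<in>set u. v \<noteq> [] \<and> hd v = False"
  shows "\<exists>u'. weq (pword (rev s @ map hgen u @ s)) (hword u') \<and> (\<forall>v\<in>set u'. v \<noteq> [] \<and> hd v = True)"
proof -
  note g0 = weq_conj_g0_H0[OF u] and h1 = weq_conj_h1_H0[OF u] and h1' = weq_conj_h1_10[OF u]
  have T: "\<forall>v\<in>set (map (Cons True) u). v \<noteq> [] \<and> hd v = True"
    and TT: "\<forall>v\<in>set (map (\<lambda>v. True # True # tl v) u). v \<noteq> [] \<and> hd v = True" by auto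
  from s consider "s = [G0]" | "s = [h1] @ [G0]" | "s = [G0] @ [h1]" | "s = ([h1] @ [G0]) @ [h1]"
    unfolding dihedral_words_def by auto
  then show ?thesis
  proof cases
    case 1 with g0 T show ?thesis by blast
  next
    case 2 with weq_conj_trans[OF h1 g0] T show ?thesis by blast
  next
    case 3 with weq_conj_trans[OF g0 h1'] TT show ?thesis by blast
  next
    case 4 with weq_conj_trans[OF weq_conj_trans[OF h1 g0] h1'] TT show ?thesis by blast
  qed
qed

lemma weq_conj_G0_H0:
  assumes w: "set w \<subseteq> insert G0 hgens" and nH: "cls (pword w) \<notin> Hs"
    and u: "\<forall>v\<in>set u. v \<noteq> [] \<and> hd v = False"
  shows "\<exists>u'. weq (pword (rev w @ map hgen u @ w)) (hword u') \<and> (\<forall>v\<in>set u'. v \<noteq> [] \<and> hd v = True)"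
proof -
  obtain m s where e: "weq (pword w) (pword (m @ s))" and m: "set m \<subseteq> hgens - {h1}"
    and s: "s \<in> dihedral_words"
    using weq_G0_normal_form[OF w] by blast
  have s_not_H: "s \<notin> {[], [h1]}"
  proof
    assume "s \<in> {[], [h1]}"
    with m have "set (m @ s) \<subseteq> hgens" by (auto simp: hgens_def)
    then have "cls (pword (m @ s)) \<in> Hs" unfolding Hs_eq words_over_def by blast
    with nH e show False by (simp add: cls_eqI)
  qed
  have "cls (pword (rev w)) = cls (pword (rev (m @ s)))"
    using e by (metis inv_cls_pword cls_eqI)
  then have er: "weq (pword (rev w)) (pword (rev (m @ s)))" by (simp add: cls_eq_iff)
  obtain u2 where u2: "weq (pword (rev m @ map hgen u @ m)) (hword u2)" "\<forall>v\<in>set u2. v \<noteq> [] \<and> hd v = False"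
    using weq_conj_hgens_same_half[OF _ u] m by blast
  obtain u' where u': "weq (pword (rev s @ map hgen u2 @ s)) (hword u')" "\<forall>v\<in>set u'. v \<noteq> [] \<and> hd v = True"
    using weq_conj_dihedral_H0[OF s s_not_H u2(2)] by blast
  have "weq (pword (rev w @ map hgen u @ w)) (pword (rev (m @ s) @ map hgen u @ m @ s))"
    using weq_append[OF er weq_append[OF weq_refl[of "hword u"] e]] by simp
  also have "\<dots> = pword (rev s @ (rev m @ map hgen u @ m) @ s)" by simp
  also have "weq \<dots> (pword (rev s @ map hgen u2 @ s))" by (rule weq_pword_in_context[OF u2(1)])
  also have "weq \<dots> (hword u')" by (rule u'(1))
  finally show ?thesis using u'(2) by blast
qed


section \<open>The symmetry exchanging \<open>0\<close> and \<open>1\<close>\<close>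

fun flip_gen :: "gen \<Rightarrow> gen" where
  "flip_gen (Hg b r) = Hg (\<not> b) (map Not r)"
| "flip_gen G0 = G1"
| "flip_gen G1 = G0"

definition flip_letter :: "letter \<Rightarrow> letter" where "flip_letter x = (flip_gen (fst x), snd x)"

lemma flip_gen_flip_gen [simp]: "flip_gen (flip_gen g) = g"
  by (cases g) (auto simp: comp_def)

lemma flip_letter_simps [simp]:
  "flip_letter (lt g) = lt (flip_gen g)"
  "flip_letter (ltinv g) = ltinv (flip_gen g)"
  "flip_letter (linv x) = linv (flip_letter x)"
  by (simp_all add: flip_letter_def lt_def ltinv_def linv_def)

lemma flip_gen_hgen [simp]: "v \<noteq> [] \<Longrightarrow> flip_gen (hgen v) = hgen (map Not v)"
  by (cases v) auto

lemma hconj_map_Not: "hconj (map Not i) (map Not j) = map Not (hconj i j)"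
proof (induction i arbitrary: j)
  case Nil then show ?case by (cases j) (auto simp: hconj_simps)
next
  case (Cons a i) then show ?case by (cases j) (auto simp: hconj_simps)
qed

lemma relator_flip:
  assumes "r \<in> relators" shows "map flip_letter r \<in> relators"
proof -
  have conj: "[lt (hgen (map Not i)), lt (flip_gen (hgen j)), lt (hgen (map Not i)),
      ltinv (flip_gen (hgen (hconj i j)))] \<in> relators" if "i \<noteq> []" "length i \<le> length j" for i j
  proof -
    have "j \<noteq> []" using that by auto
    with that hconj_relator[of "map Not i" "map Not j"] show ?thesis by (simp add: hconj_map_Not)
  qed
  have square: "[lt (hgen w), lt (hgen w)] \<in> relators" if "w \<noteq> []" for w
    using that unfolding relators_def by blast
  have g_relators:
    "[lt G0, lt G0] \<in> relators" "[lt G1, lt G1] \<in> relators"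
    "[lt G0, lt (hgen [True]), lt G0, lt (hgen [True]), lt G0, lt (hgen [True])] \<in> relators"
    "[lt G1, lt (hgen [False]), lt G1, lt (hgen [False]), lt G1, lt (hgen [False])] \<in> relators"
    "[lt G0, lt (hgen (True # False # r)), lt G0, ltinv (hgen (False # r))] \<in> relators"
    "[lt G0, lt (hgen (True # True # r)), lt G0, ltinv (hgen (True # True # r))] \<in> relators"
    "[lt G1, lt (hgen (False # False # r)), lt G1, ltinv (hgen (False # False # r))] \<in> relators"
    "[lt G1, lt (hgen (False # True # r)), lt G1, ltinv (hgen (True # r))] \<in> relators" for r
    unfolding relators_def by blast+
  from assms[unfolded relators_def] show ?thesis
    by (elim UnE) (auto simp: conj square g_relators[simplified])
qed

lemma weq_flip: "weq u v \<Longrightarrow> weq (map flip_letter u) (map flip_letter v)"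
proof (induction rule: weq.induct)
  case (weq_cancel u x v) then show ?case using weq.weq_cancel by simp
next
  case (weq_rel r u v) then show ?case using weq.weq_rel[OF relator_flip] by simp
qed (auto intro: weq.intros)

lemma weq_pword_flip: "weq (pword x) (pword y) \<Longrightarrow> weq (pword (map flip_gen x)) (pword (map flip_gen y))"
  using weq_flip[of "pword x" "pword y"] by (simp add: comp_def)

lemma flip_gen_in_hgens: "g \<in> hgens \<Longrightarrow> flip_gen g \<in> hgens"
  by (auto simp: hgens_def)

lemma flip_in_Hs: "cls (pword w) \<in> Hs \<Longrightarrow> cls (pword (map flip_gen w)) \<in> Hs"
proof -
  assume "cls (pword w) \<in> Hs"
  then obtain z where z: "cls (pword w) = cls (pword z)" "set z \<subseteq> hgens"
    unfolding Hs_eq words_over_def by blast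
  from z(1) have "weq (pword w) (pword z)" by (simp add: cls_eq_iff)
  then have "cls (pword (map flip_gen w)) = cls (pword (map flip_gen z))"
    by (intro cls_eqI weq_pword_flip)
  moreover have "set (map flip_gen z) \<subseteq> hgens" using z(2) flip_gen_in_hgens by auto
  ultimately show ?thesis unfolding Hs_eq words_over_def by blast
qed

lemma map_flip_gen_hgen: "\<forall>v\<in>set u. v \<noteq> [] \<Longrightarrow> map flip_gen (map hgen u) = map hgen (map (map Not) u)"
  by (induction u) auto

lemma weq_conj_G1_H1:
  assumes w: "set w \<subseteq> insert G1 hgens" and nH: "cls (pword w) \<notin> Hs"
    and u: "\<forall>v\<in>set u. v \<noteq> [] \<and> hd v = True"
  shows "\<exists>u'. weq (pword (rev w @ map hgen u @ w)) (hword u') \<and> (\<forall>v\<in>set u'. v \<noteq> [] \<and> hd v = False)"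
proof -
  define w' where "w' = map flip_gen w"
  have w': "set w' \<subseteq> insert G0 hgens" using w flip_gen_in_hgens by (auto simp: w'_def)
  have nH': "cls (pword w') \<notin> Hs"
    using nH flip_in_Hs[of w'] by (auto simp: w'_def comp_def)
  have uF: "\<forall>v\<in>set (map (map Not) u). v \<noteq> [] \<and> hd v = False" using u by (auto simp: hd_map)
  obtain u2 where u2: "weq (pword (rev w' @ map hgen (map (map Not) u) @ w')) (hword u2)"
      "\<forall>v\<in>set u2. v \<noteq> [] \<and> hd v = True"
    using weq_conj_G0_H0[OF w' nH' uF] by blast
  have "weq (pword (map flip_gen (rev w' @ map hgen (map (map Not) u) @ w'))) (pword (map flip_gen (map hgen u2)))"
    by (rule weq_pword_flip[OF u2(1)])
  moreover have "map flip_gen (rev w' @ map hgen (map (map Not) u) @ w') = rev w @ map hgen u @ w"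
    using map_flip_gen_hgen[of "map (map Not) u"] uF by (simp add: w'_def rev_map comp_def)
  moreover have "map flip_gen (map hgen u2) = map hgen (map (map Not) u2)"
    using map_flip_gen_hgen u2(2) by blast
  moreover have "\<forall>v\<in>set (map (map Not) u2). v \<noteq> [] \<and> hd v = False" using u2(2) by (auto simp: hd_map)
  ultimately show ?thesis by metis
qed


lemma Hs_carrier: "Hs \<subseteq> carrier Gamma"
  using Hs_subgroup by (rule subgroup.subset)

lemma conjH_iff:
  assumes g: "g \<in> carrier Gamma" and z: "z \<in> carrier Gamma"
  shows "z \<in> conjH g \<longleftrightarrow> inv\<^bsub>Gamma\<^esub> g \<otimes>\<^bsub>Gamma\<^esub> z \<otimes>\<^bsub>Gamma\<^esub> g \<in> Hs"
proof
  assume "z \<in> conjH g"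
  then obtain x where x: "x \<in> Hs" "z = g \<otimes>\<^bsub>Gamma\<^esub> x \<otimes>\<^bsub>Gamma\<^esub> inv\<^bsub>Gamma\<^esub> g"
    unfolding conjH_def by blast
  have "x \<in> carrier Gamma" using x(1) Hs_carrier by blast
  with g have "inv\<^bsub>Gamma\<^esub> g \<otimes>\<^bsub>Gamma\<^esub> z \<otimes>\<^bsub>Gamma\<^esub> g = x"
    unfolding x(2) by (simp add: Gamma.m_assoc flip: Gamma.m_assoc[of "inv\<^bsub>Gamma\<^esub> g" g])
  with x show "inv\<^bsub>Gamma\<^esub> g \<otimes>\<^bsub>Gamma\<^esub> z \<otimes>\<^bsub>Gamma\<^esub> g \<in> Hs" by simp
next
  assume h: "inv\<^bsub>Gamma\<^esub> g \<otimes>\<^bsub>Gamma\<^esub> z \<otimes>\<^bsub>Gamma\<^esub> g \<in> Hs"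
  have "z = g \<otimes>\<^bsub>Gamma\<^esub> (inv\<^bsub>Gamma\<^esub> g \<otimes>\<^bsub>Gamma\<^esub> z \<otimes>\<^bsub>Gamma\<^esub> g) \<otimes>\<^bsub>Gamma\<^esub> inv\<^bsub>Gamma\<^esub> g"
    using g z by (simp add: Gamma.m_assoc flip: Gamma.m_assoc[of g "inv\<^bsub>Gamma\<^esub> g"])
  with h show "z \<in> conjH g" unfolding conjH_def by blast
qed

lemma conj_mult:
  assumes "a \<in> carrier Gamma" "b \<in> carrier Gamma" "c \<in> carrier Gamma"
  shows "inv\<^bsub>Gamma\<^esub> (a \<otimes>\<^bsub>Gamma\<^esub> b) \<otimes>\<^bsub>Gamma\<^esub> c \<otimes>\<^bsub>Gamma\<^esub> (a \<otimes>\<^bsub>Gamma\<^esub> b)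
       = inv\<^bsub>Gamma\<^esub> b \<otimes>\<^bsub>Gamma\<^esub> (inv\<^bsub>Gamma\<^esub> a \<otimes>\<^bsub>Gamma\<^esub> c \<otimes>\<^bsub>Gamma\<^esub> a) \<otimes>\<^bsub>Gamma\<^esub> b"
  using assms by (simp add: Gamma.inv_mult_group Gamma.m_assoc)

lemma Tprod_carrier: "Tprod j k \<subseteq> carrier Gamma"
  by (induction k arbitrary: j) (use Gs_carrier in fastforce)+

lemma T_carrier: "T j k \<subseteq> carrier Gamma"
  unfolding T_def using Hs_carrier Tprod_carrier by auto

lemma conj_Gs_diff_Hs_Hj:
  assumes x: "x \<in> Gs j" "x \<notin> Hs" and y: "y \<in> Hj (odd j)"
  shows "inv\<^bsub>Gamma\<^esub> x \<otimes>\<^bsub>Gamma\<^esub> y \<otimes>\<^bsub>Gamma\<^esub> x \<in> Hj (even j)"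
proof -
  obtain w where w: "x = cls (pword w)" "set w \<subseteq> insert (if even j then G0 else G1) hgens"
    using x(1) unfolding Gs_eq words_over_def by blast
  obtain u where u: "y = cls (hword u)" "\<forall>v\<in>set u. v \<noteq> [] \<and> hd v = odd j"
    using y Hj_iff by blast
  have eq: "inv\<^bsub>Gamma\<^esub> x \<otimes>\<^bsub>Gamma\<^esub> y \<otimes>\<^bsub>Gamma\<^esub> x = cls (pword (rev w @ map hgen u @ w))"
    using w(1) u(1) by (simp add: inv_cls_pword mult_cls)
  have "\<exists>u'. weq (pword (rev w @ map hgen u @ w)) (hword u') \<and> (\<forall>v\<in>set u'. v \<noteq> [] \<and> hd v = even j)"
  proof (cases "even j")
    case True
    with w u x(2) show ?thesis using weq_conj_G0_H0[of w u] by simp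
  next
    case False
    with w u x(2) show ?thesis using weq_conj_G1_H1[of w u] by simp
  qed
  then show ?thesis unfolding eq Hj_iff by (auto simp: cls_eq_iff)
qed

lemma conj_Tprod_Hj:
  "g \<in> Tprod j k \<Longrightarrow> y \<in> Hj (odd j) \<Longrightarrow> inv\<^bsub>Gamma\<^esub> g \<otimes>\<^bsub>Gamma\<^esub> y \<otimes>\<^bsub>Gamma\<^esub> g \<in> Hs"
proof (induction k arbitrary: j g y)
  case 0
  then have "y \<in> carrier Gamma" using Hj_subset_Hs Hs_carrier by blast
  with 0 Hj_subset_Hs show ?case by auto
next
  case (Suc k)
  then obtain x g' where g: "g = x \<otimes>\<^bsub>Gamma\<^esub> g'" "x \<in> Gs j" "x \<notin> Hs" "g' \<in> Tprod (Suc j) k" by auto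
  have c: "x \<in> carrier Gamma" "g' \<in> carrier Gamma" "y \<in> carrier Gamma"
    using g Gs_carrier Tprod_carrier Suc.prems Hj_subset_Hs Hs_carrier by blast+
  have "inv\<^bsub>Gamma\<^esub> x \<otimes>\<^bsub>Gamma\<^esub> y \<otimes>\<^bsub>Gamma\<^esub> x \<in> Hj (odd (Suc j))"
    using conj_Gs_diff_Hs_Hj[OF g(2,3) Suc.prems(2)] by simp
  from Suc.IH[OF g(4) this] show ?case using conj_mult[OF c] g(1) by simp
qed

lemma K_iff: "y \<in> K j \<longleftrightarrow> (\<forall>k. \<forall>g\<in>T j k. y \<in> conjH g)"
  unfolding K_def C_def by simp

lemma K_subset_Hs: "K j \<subseteq> Hs"
proof
  fix y assume "y \<in> K j"
  moreover have "\<one>\<^bsub>Gamma\<^esub> \<in> T j 0" using subgroup.one_closed[OF Hs_subgroup] by (simp add: T_def)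
  ultimately have "y \<in> conjH \<one>\<^bsub>Gamma\<^esub>" unfolding K_iff by blast
  then show "y \<in> Hs" using Hs_carrier by (auto simp: conjH_def)
qed

lemma conjH_of_Hs: "g \<in> Hs \<Longrightarrow> z \<in> Hs \<Longrightarrow> z \<in> conjH g"
  using Hs_carrier Hs_subgroup
  by (subst conjH_iff) (auto intro: subgroup.m_closed subgroup.m_inv_closed)

lemma Hj_subset_K: "Hj (odd j) \<subseteq> K j"
proof
  fix y assume y: "y \<in> Hj (odd j)"
  then have yH: "y \<in> Hs" and yc: "y \<in> carrier Gamma" using Hj_subset_Hs Hs_carrier by blast+
  show "y \<in> K j" unfolding K_iff
  proof (intro allI ballI)
    fix k g assume g: "g \<in> T j k"
    show "y \<in> conjH g"
    proof (cases "k = 0")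
      case True then show ?thesis using g yH conjH_of_Hs by (simp add: T_def)
    next
      case False
      then have "g \<in> Tprod j k" using g by (simp add: T_def)
      with yc y show ?thesis using Tprod_carrier conj_Tprod_Hj conjH_iff by blast
    qed
  qed
qed

lemma conj_K_Gs_diff_Hs:
  assumes y: "y \<in> K j" and x: "x \<in> Gs j" "x \<notin> Hs"
  shows "inv\<^bsub>Gamma\<^esub> x \<otimes>\<^bsub>Gamma\<^esub> y \<otimes>\<^bsub>Gamma\<^esub> x \<in> K (Suc j)"
  unfolding K_iff
proof (intro allI ballI)
  fix k g assume g: "g \<in> T (Suc j) k"
  have xc: "x \<in> carrier Gamma" using x Gs_carrier by blast
  have yc: "y \<in> carrier Gamma" using y K_subset_Hs Hs_carrier by blast
  have zc: "inv\<^bsub>Gamma\<^esub> x \<otimes>\<^bsub>Gamma\<^esub> y \<otimes>\<^bsub>Gamma\<^esub> x \<in> carrier Gamma" using xc yc by simp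
  show "inv\<^bsub>Gamma\<^esub> x \<otimes>\<^bsub>Gamma\<^esub> y \<otimes>\<^bsub>Gamma\<^esub> x \<in> conjH g"
  proof (cases k)
    case 0
    have "x \<otimes>\<^bsub>Gamma\<^esub> \<one>\<^bsub>Gamma\<^esub> \<in> T j 1" using x by (auto simp: T_def)
    with y have "y \<in> conjH (x \<otimes>\<^bsub>Gamma\<^esub> \<one>\<^bsub>Gamma\<^esub>)" unfolding K_iff by blast
    then have "inv\<^bsub>Gamma\<^esub> x \<otimes>\<^bsub>Gamma\<^esub> y \<otimes>\<^bsub>Gamma\<^esub> x \<in> Hs" using xc yc by (simp add: conjH_iff)
    with 0 g show ?thesis using conjH_of_Hs by (simp add: T_def)
  next
    case (Suc k')
    then have g': "g \<in> Tprod (Suc j) k" using g by (simp add: T_def)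
    then have gc: "g \<in> carrier Gamma" using Tprod_carrier by blast
    have "x \<otimes>\<^bsub>Gamma\<^esub> g \<in> T j (Suc k)" using g' x by (auto simp: T_def)
    with y have "y \<in> conjH (x \<otimes>\<^bsub>Gamma\<^esub> g)" unfolding K_iff by blast
    then have "inv\<^bsub>Gamma\<^esub> (x \<otimes>\<^bsub>Gamma\<^esub> g) \<otimes>\<^bsub>Gamma\<^esub> y \<otimes>\<^bsub>Gamma\<^esub> (x \<otimes>\<^bsub>Gamma\<^esub> g) \<in> Hs"
      using xc gc yc by (simp add: conjH_iff)
    then show ?thesis using conj_mult[OF xc gc yc] conjH_iff[OF gc zc] by simp
  qed
qed


section \<open>\<open>K\<^sub>j\<close> acts trivially on half of the sequences\<close>

definition agree :: "nat \<Rightarrow> (nat \<Rightarrow> bool) \<Rightarrow> (nat \<Rightarrow> bool) \<Rightarrow> bool" where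
  "agree n p q \<longleftrightarrow> (\<forall>k<n. p k = q k)"

lemma agree_scons: "agree n p q \<Longrightarrow> agree (Suc n) (scons a p) (scons a q)"
  by (auto simp: agree_def less_Suc_eq_0_disj)

lemma agree_scons_stl: "agree n p q \<Longrightarrow> agree n (scons a (stl p)) (scons a (stl q))"
  unfolding agree_def
proof (intro allI impI)
  fix k assume "\<forall>k<n. p k = q k" "k < n"
  then show "scons a (stl p) k = scons a (stl q) k" by (cases k) (simp_all add: stl_apply)
qed

lemma word_act_pword_rev_cancel: "word_act (pword xs) (word_act (pword (rev xs)) s) = s"
proof -
  have "word_act (pword (xs @ rev xs)) = id" using word_act_weq[OF weq_rev_cancel[of xs]] by simp
  then have "word_act (pword xs) \<circ> word_act (pword (rev xs)) = id" by (simp only: map_append word_act_append)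
  then show ?thesis by (metis comp_apply id_apply)
qed

lemma coset_representative:
  obtains xs where "cls (pword xs) \<in> Gs j"
    "\<And>p. p 0 = odd j \<Longrightarrow> word_act (pword xs) p = scons (even j) (scons b (stl p))"
proof -
  have in_Gs: "cls (pword xs) \<in> Gs j" if "set xs \<subseteq> insert (if even j then G0 else G1) hgens" for xs
    using that unfolding Gs_eq words_over_def by blast
  consider "even j" "b" | "even j" "\<not> b" | "odd j" "b" | "odd j" "\<not> b" by blast
  then show thesis
  proof cases
    case 1
    have "cls (pword [h1, G0]) \<in> Gs j" using 1 by (intro in_Gs) (auto simp: hgens_def)
    moreover have "word_act (pword [h1, G0]) p = scons (even j) (scons b (stl p))" if "p 0 = odd j" for p
      using 1 that by (simp add: lt_def g0_act_def)
    ultimately show thesis by (rule that)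
  next
    case 2
    have "cls (pword [G0]) \<in> Gs j" using 2 by (intro in_Gs) auto
    moreover have "word_act (pword [G0]) p = scons (even j) (scons b (stl p))" if "p 0 = odd j" for p
      using 2 that by (simp add: lt_def g0_act_def)
    ultimately show thesis by (rule that)
  next
    case 3
    have "cls (pword [G1]) \<in> Gs j" using 3 by (intro in_Gs) auto
    moreover have "word_act (pword [G1]) p = scons (even j) (scons b (stl p))" if "p 0 = odd j" for p
      using 3 that by (simp add: lt_def g1_act_def)
    ultimately show thesis by (rule that)
  next
    case 4
    have "cls (pword [Hg False [], G1]) \<in> Gs j" using 4 by (intro in_Gs) (auto simp: hgens_def)
    moreover have "word_act (pword [Hg False [], G1]) p = scons (even j) (scons b (stl p))" if "p 0 = odd j" for p
      using 4 that by (simp add: lt_def g1_act_def)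
    ultimately show thesis by (rule that)
  qed
qed

lemma K_agree_step:
  assumes y: "cls w \<in> K j" and x: "cls (pword xs) \<in> Gs j" "cls (pword xs) \<notin> Hs"
    and IH: "\<And>w' t. cls w' \<in> K (Suc j) \<Longrightarrow> t 0 = c \<Longrightarrow> agree n (word_act w' t) t"
    and shift: "\<And>p q. p 0 = c \<Longrightarrow> q 0 = c \<Longrightarrow> agree n p q
      \<Longrightarrow> agree (Suc n) (word_act (pword xs) p) (word_act (pword xs) q)"
    and t: "t 0 = c"
  shows "agree (Suc n) (word_act w (word_act (pword xs) t)) (word_act (pword xs) t)"
proof -
  define z where "z = pword (rev xs) @ w @ pword xs"
  have "cls z = inv\<^bsub>Gamma\<^esub> (cls (pword xs)) \<otimes>\<^bsub>Gamma\<^esub> cls w \<otimes>\<^bsub>Gamma\<^esub> cls (pword xs)"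
    by (simp add: z_def inv_cls_pword mult_cls)
  then have z_K: "cls z \<in> K (Suc j)" using conj_K_Gs_diff_Hs[OF y x] by simp
  have "agree n (word_act z t) t" using IH[of z t] z_K t by blast
  moreover have "word_act z t 0 = c" using word_act_Hs_0 z_K K_subset_Hs t by blast
  ultimately have "agree (Suc n) (word_act (pword xs) (word_act z t)) (word_act (pword xs) t)"
    using shift t by blast
  moreover have "word_act (pword xs) (word_act z t) = word_act w (word_act (pword xs) t)"
    unfolding z_def word_act_append comp_apply by (rule word_act_pword_rev_cancel)
  ultimately show ?thesis by simp
qed

text \<open>Conjugation by the representative \<open>x\<close> of \<open>coset_representative\<close> moves \<open>cls w\<close> into
  \<open>K (Suc j)\<close> and the sequences one level deeper, so agreement up to depth \<open>n\<close> improves to \<open>Suc n\<close>.\<close>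

lemma K_agree: "cls w \<in> K j \<Longrightarrow> s 0 = even j \<Longrightarrow> agree n (word_act w s) s"
proof (induction n arbitrary: j w s)
  case 0 then show ?case by (simp add: agree_def)
next
  case (Suc n)
  obtain xs where xs: "cls (pword xs) \<in> Gs j"
    "\<And>p. p 0 = odd j \<Longrightarrow> word_act (pword xs) p = scons (even j) (scons (s 1) (stl p))"
    using coset_representative by blast
  define t where "t = scons (odd j) (stl (stl s))"
  have s: "word_act (pword xs) t = s"
    using xs(2)[of t] Suc.prems(2) by (simp add: t_def) (metis scons_stl scons_stl_self stl_apply One_nat_def)
  have nH: "cls (pword xs) \<notin> Hs"
    using word_act_Hs_0[of "pword xs" t] s Suc.prems(2) by (auto simp: t_def)
  have shift: "agree (Suc n) (word_act (pword xs) p) (word_act (pword xs) q)"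
    if "p 0 = odd j" "q 0 = odd j" "agree n p q" for p q
    using that by (simp add: xs(2) agree_scons agree_scons_stl)
  have IH: "agree n (word_act w' t') t'" if "cls w' \<in> K (Suc j)" "t' 0 = odd j" for w' t'
    using Suc.IH[of w' "Suc j" t'] that by simp
  have "agree (Suc n) (word_act w (word_act (pword xs) t)) (word_act (pword xs) t)"
    by (rule K_agree_step[OF Suc.prems(1) xs(1) nH IH shift]) (simp_all add: t_def)
  then show ?case by (simp add: s)
qed

lemma K_fixes_half:
  assumes "cls w \<in> K j" "s 0 = even j" shows "word_act w s = s"
proof
  fix k
  have "agree (Suc k) (word_act w s) s" using K_agree assms by blast
  then show "word_act w s k = s k" by (simp add: agree_def)
qed

lemma K_eq_Hj: "K j = Hj (odd j)"
proof
  show "K j \<subseteq> Hj (odd j)"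
  proof
    fix y assume y: "y \<in> K j"
    then have "y \<in> carrier Gamma" using K_subset_Hs Hs_carrier by blast
    then obtain w where w: "y = cls w" by (auto simp: carrier_Gamma)
    have "cls w \<in> Hj (odd j)"
      using y w K_subset_Hs K_fixes_half by (intro Hj_of_fixes_other_half) auto
    with w show "y \<in> Hj (odd j)" by simp
  qed
qed (rule Hj_subset_K)

lemma kerGamma_subset_K: "kerGamma \<subseteq> K j"
  unfolding kerGamma_def K_def C_def using T_carrier by blast

lemma one_in_kerGamma: "\<one>\<^bsub>Gamma\<^esub> \<in> kerGamma"
proof -
  have "\<one>\<^bsub>Gamma\<^esub> \<in> conjH g" if "g \<in> carrier Gamma" for g
    using that subgroup.one_closed[OF Hs_subgroup] by (simp add: conjH_iff)
  then show ?thesis unfolding kerGamma_def by blast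
qed

theorem lemma4p3:
  shows "K 0 = Hj False \<and> K 1 = Hj True \<and> kerGamma = K 0 \<inter> K 1
         \<and> K 0 \<inter> K 1 = Hj False \<inter> Hj True \<and> Hj False \<inter> Hj True = {\<one>\<^bsub>Gamma\<^esub>}"
proof -
  have K0: "K 0 = Hj False" and K1: "K 1 = Hj True" using K_eq_Hj[of 0] K_eq_Hj[of 1] by simp_all
  have "kerGamma \<subseteq> K 0 \<inter> K 1" using kerGamma_subset_K by blast
  moreover have "K 0 \<inter> K 1 \<subseteq> kerGamma"
    using one_in_kerGamma Hj_False_inter_Hj_True unfolding K0 K1 by simp
  ultimately have "kerGamma = K 0 \<inter> K 1" by (rule equalityI)
  with K0 K1 Hj_False_inter_Hj_True show ?thesis by simp
qed

end
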